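(* For every $n$ with $2\le n\le\infty$, the identity $xysxty \approx yxsxty$ is a finite identity basis for the sylvester monoid $\mathrm{sylv}_n$. Consequently, all sylvester monoids of rank at least $2$ (including rank $\infty$) are equationally equivalent.
   Context: Let $\mathcal{A}=\{1<2<3<\cdots\}$, $\mathcal{A}_n=\{1<\cdots<n\}$, $\mathcal{A}_\infty=\mathcal{A}$. A right strict binary search tree is a labelled rooted binary tree (labels in $\mathcal{A}$) in which each node's label is $\ge$ every label in its left subtree and $<$ every label in its right subtree. Inserting $a$ into such a tree $T$: if $T$ is empty, create a node labelled $a$; otherwise, with root label $x$, recursively insert $a$ into the right subtree if $a>x$ and into the left subtree otherwise. For $w=w_1\cdots w_k\in\mathcal{A}^*$, $\mathrm{P}(w)$ is obtained from the empty tree by inserting $w_k,\dots,w_1$ in this order. The relation $u\equiv v\iff\mathrm{P}(u)=\mathrm{P}(v)$ is a congruence, and $\mathrm{sylv}_n=\mathcal{A}_n^*/{\equiv}$. Identities: $\mathcal{X}$ is a countably infinite alphabet; an identity is $\mathbf{u}\approx\mathbf{v}$ with $\mathbf{u},\mathbf{v}\in\mathcal{X}^*$; a monoid $S$ satisfies it if $\varphi(\mathbf{u})=\varphi(\mathbf{v})$ for all maps $\varphi:\mathcal{X}\to S$ (extended to monoid homomorphisms). $\mathbf{u}\approx\mathbf{v}$ is derived from a set $\Sigma$ if there is a sequence $\mathbf{u}=\mathbf{u}_1,\dots,\mathbf{u}_m=\mathbf{v}$ with $\mathbf{u}_i=\mathbf{a}\varphi(\mathbf{p})\mathbf{b}$,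 $\mathbf{u}_{i+1}=\mathbf{a}\varphi(\mathbf{q})\mathbf{b}$ for some words $\mathbf{a},\mathbf{b}\in\mathcal{X}^*$, a monoid endomorphism $\varphi$ of $\mathcal{X}^*$ (letters may go to the empty word), and $\mathbf{p}\approx\mathbf{q}\in\Sigma$. A finite identity basis for $S$ is a finite set $\Sigma$ of identities satisfied by $S$ from which every identity satisfied by $S$ is derived. Two monoids are equationally equivalent if they satisfy the same identities. *)

theory Defs
  imports Main "HOL-Library.Tree" "HOL-Library.Extended_Nat"
begin

text \<open>Letters of the alphabet are positive naturals; A_n = {1..n}, A_infinity = {1,2,...}.
  The rank n is an extended natural (\<infinity> allowed).\<close>

definition in_alph :: "enat \<Rightarrow> nat \<Rightarrow> bool" where
  "in_alph n a \<longleftrightarrow> 1 \<le> a \<and> enat a \<le> n"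

fun bst_ins :: "nat \<Rightarrow> nat tree \<Rightarrow> nat tree" where
  "bst_ins a Leaf = Node Leaf a Leaf"
| "bst_ins a (Node l x r) =
     (if a > x then Node l x (bst_ins a r) else Node (bst_ins a l) x r)"

text \<open>P(w_1...w_k): insert w_k, ..., w_1 in this order into the empty tree.\<close>
definition sylvP :: "nat list \<Rightarrow> nat tree" where
  "sylvP w = foldr bst_ins w Leaf"

text \<open>Variables (the countably infinite alphabet X) are naturals; words over X are nat lists.
  An identity is a pair of words.\<close>

type_synonym ident = "nat list \<times> nat list"

definition subst :: "(nat \<Rightarrow> 'a list) \<Rightarrow> nat list \<Rightarrow> 'a list" where
  "subst \<phi> u = concat (map \<phi> u)"

text \<open>sylv_n satisfies u \<approx> v: every map X \<rightarrow> sylv_n factors through A_n^*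
  (the quotient map is surjective), so this means: for every assignment of words over A_n
  to the variables, the two resulting words have the same P-symbol.\<close>
definition sylv_sat :: "enat \<Rightarrow> nat list \<Rightarrow> nat list \<Rightarrow> bool" where
  "sylv_sat n u v \<longleftrightarrow>
     (\<forall>\<phi> :: nat \<Rightarrow> nat list. (\<forall>i. \<forall>a\<in>set (\<phi> i). in_alph n a) \<longrightarrow>
        sylvP (subst \<phi> u) = sylvP (subst \<phi> v))"

definition deriv_step :: "ident set \<Rightarrow> nat list \<Rightarrow> nat list \<Rightarrow> bool" where
  "deriv_step \<Sigma> w w' \<longleftrightarrow>
     (\<exists>a b \<phi> p q. ((p, q) \<in> \<Sigma> \<or> (q, p) \<in> \<Sigma>) \<and>
        w = a @ subst \<phi> p @ b \<and> w' = a @ subst \<phi> q @ b)"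

definition derivable :: "ident set \<Rightarrow> nat list \<Rightarrow> nat list \<Rightarrow> bool" where
  "derivable \<Sigma> u v \<longleftrightarrow> (deriv_step \<Sigma>)\<^sup>*\<^sup>* u v"

definition finite_identity_basis :: "(nat list \<Rightarrow> nat list \<Rightarrow> bool) \<Rightarrow> ident set \<Rightarrow> bool" where
  "finite_identity_basis Sat \<Sigma> \<longleftrightarrow>
     finite \<Sigma> \<and> (\<forall>(p, q)\<in>\<Sigma>. Sat p q) \<and> (\<forall>u v. Sat u v \<longrightarrow> derivable \<Sigma> u v)"

end

(* Inserting a word u into a right strict binary search tree T sends each letter down to a leaf
   by comparing it with the labels of T, so the result depends only on the multiset of u as soon
   as any two distinct letters of u are separated by a label of T.  In x y s x t y the prefix x y
   is inserted into a tree that already contains all its letters, hence the identity holds in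
   every sylvester monoid.

   Conversely, substituting 1 for x, 2 for y and the empty word for all other variables, the
   left spine of the resulting tree counts the occurrences of y after the last occurrence of x,
   so already sylv_2 separates words that differ in one of these counts.  Words on which all of
   these counts agree are related by the identity: it lets two adjacent letters commute
   whenever both occur again later, which is enough to bring the first letter of one word to
   the front of the other and to proceed by induction. *)

theory Submission
  imports Defs "HOL-Library.Multiset"
begin

lemma sylvP_Nil [simp]: "sylvP [] = Leaf"
  by (simp add: sylvP_def)

lemma sylvP_Cons [simp]: "sylvP (c # w) = bst_ins c (sylvP w)"
  by (simp add: sylvP_def)

lemma sylvP_append: "sylvP (u @ w) = foldr bst_ins u (sylvP w)"
  by (simp add: sylvP_def)

lemma set_tree_bst_ins [simp]: "set_tree (bst_ins c T) = insert c (set_tree T)"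
  by (induction T) auto

lemma set_tree_sylvP [simp]: "set_tree (sylvP w) = set w"
  by (induction w) auto

fun rbst :: "nat tree \<Rightarrow> bool" where
  "rbst Leaf = True"
| "rbst (Node l z r) \<longleftrightarrow>
     rbst l \<and> rbst r \<and> (\<forall>y\<in>set_tree l. y \<le> z) \<and> (\<forall>y\<in>set_tree r. z < y)"

lemma rbst_bst_ins: "rbst T \<Longrightarrow> rbst (bst_ins c T)"
  by (induction T) auto

lemma rbst_sylvP: "rbst (sylvP w)"
  by (induction w) (auto simp: rbst_bst_ins)

lemma foldr_bst_ins_Node:
  "foldr bst_ins u (Node l z r) =
     Node (foldr bst_ins (filter (\<lambda>c. c \<le> z) u) l) z (foldr bst_ins (filter (\<lambda>c. z < c) u) r)"
  by (induction u) auto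

fun prune_le :: "nat \<Rightarrow> nat tree \<Rightarrow> nat tree" where
  "prune_le x Leaf = Leaf"
| "prune_le x (Node l y r) = (if y \<le> x then Node (prune_le x l) y (prune_le x r) else prune_le x l)"

fun prune_gt :: "nat \<Rightarrow> nat tree \<Rightarrow> nat tree" where
  "prune_gt x Leaf = Leaf"
| "prune_gt x (Node l y r) = (if x < y then Node (prune_gt x l) y (prune_gt x r) else prune_gt x r)"

lemma sylvP_filter_le: "sylvP (filter (\<lambda>c. c \<le> x) w) = prune_le x (sylvP w)"
proof -
  have "prune_le x (bst_ins c T) = (if c \<le> x then bst_ins c (prune_le x T) else prune_le x T)"
    for c T by (induction T) auto
  then show ?thesis by (induction w) auto
qed

lemma sylvP_filter_gt: "sylvP (filter (\<lambda>c. x < c) w) = prune_gt x (sylvP w)"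
proof -
  have "prune_gt x (bst_ins c T) = (if x < c then bst_ins c (prune_gt x T) else prune_gt x T)"
    for c T by (induction T) auto
  then show ?thesis by (induction w) auto
qed

lemma foldr_bst_ins_cong:
  "sylvP u = sylvP v \<Longrightarrow> foldr bst_ins u T = foldr bst_ins v T"
  by (induction T arbitrary: u v)
     (auto simp: foldr_bst_ins_Node sylvP_filter_le sylvP_filter_gt simp flip: sylvP_def)

lemma sylvP_cong:
  assumes "sylvP u = sylvP v"
  shows "sylvP (p @ u @ q) = sylvP (p @ v @ q)"
  using foldr_bst_ins_cong[OF assms, of "sylvP q"] by (simp add: sylvP_append)

definition separates :: "nat set \<Rightarrow> nat list \<Rightarrow> bool" where
  "separates Y u \<longleftrightarrow> (\<forall>c\<in>set u. \<forall>c'\<in>set u. c < c' \<longrightarrow> (\<exists>y\<in>Y. c \<le> y \<and> y < c'))"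

lemma separates_filter:
  assumes "rbst (Node l z r)" "separates (set_tree (Node l z r)) u"
  shows "separates (set_tree l) (filter (\<lambda>c. c \<le> z) u)"
    and "separates (set_tree r) (filter (\<lambda>c. z < c) u)"
proof -
  have l: "\<forall>y\<in>set_tree l. y \<le> z" and r: "\<forall>y\<in>set_tree r. z < y"
    using assms(1) by auto
  have sep: "\<exists>y\<in>insert z (set_tree l \<union> set_tree r). c \<le> y \<and> y < c'"
    if "c \<in> set u" "c' \<in> set u" "c < c'" for c c'
    using assms(2) that unfolding separates_def by auto
  show "separates (set_tree l) (filter (\<lambda>c. c \<le> z) u)"
    unfolding separates_def
  proof (intro ballI impI)
    fix c c' assume "c \<in> set (filter (\<lambda>c. c \<le> z) u)" "c' \<in> set (filter (\<lambda>c. c \<le> z) u)" "c < c'"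
    then have "c \<in> set u" "c' \<in> set u" "c < c'" "c' \<le> z" by auto
    with sep r show "\<exists>y\<in>set_tree l. c \<le> y \<and> y < c'" by fastforce
  qed
  show "separates (set_tree r) (filter (\<lambda>c. z < c) u)"
    unfolding separates_def
  proof (intro ballI impI)
    fix c c' assume "c \<in> set (filter (\<lambda>c. z < c) u)" "c' \<in> set (filter (\<lambda>c. z < c) u)" "c < c'"
    then have "c \<in> set u" "c' \<in> set u" "c < c'" "z < c" by auto
    with sep l show "\<exists>y\<in>set_tree r. c \<le> y \<and> y < c'" by fastforce
  qed
qed

lemma separates_empty_mset_eq:
  assumes "mset u = mset v" "separates {} u"
  shows "u = v"
proof -
  have "sorted w" if "separates {} w" for w
  proof -
    have "\<forall>c\<in>set w. \<forall>c'\<in>set w. c \<le> c'"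
      using that by (auto simp: separates_def not_less[symmetric])
    then show ?thesis by (induction w) auto
  qed
  moreover have "separates {} v"
    using assms by (simp add: separates_def flip: mset_eq_setD[OF assms(1)])
  ultimately show ?thesis
    using assms by (metis properties_for_sort)
qed

lemma foldr_bst_ins_perm:
  "rbst T \<Longrightarrow> mset u = mset v \<Longrightarrow> separates (set_tree T) u \<Longrightarrow>
   foldr bst_ins u T = foldr bst_ins v T"
proof (induction T arbitrary: u v)
  case Leaf
  then show ?case using separates_empty_mset_eq[of u v] by simp
next
  case (Node l z r)
  have "foldr bst_ins (filter (\<lambda>c. c \<le> z) u) l = foldr bst_ins (filter (\<lambda>c. c \<le> z) v) l"
    by (rule Node.IH(1)) (use Node.prems separates_filter(1) in auto)
  moreover have "foldr bst_ins (filter (\<lambda>c. z < c) u) r = foldr bst_ins (filter (\<lambda>c. z < c) v) r"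
    by (rule Node.IH(2)) (use Node.prems separates_filter(2) in auto)
  ultimately show ?case
    by (simp add: foldr_bst_ins_Node)
qed

lemma sylvP_perm_prefix:
  assumes "mset u = mset u'" "set u \<subseteq> set w"
  shows "sylvP (u @ w) = sylvP (u' @ w)"
proof -
  have "separates (set w) u"
    using assms(2) unfolding separates_def by blast
  then show ?thesis
    using foldr_bst_ins_perm[OF rbst_sylvP assms(1)] by (simp add: sylvP_append)
qed

lemma subst_Nil [simp]: "subst \<phi> [] = []"
  by (simp add: subst_def)

lemma subst_Cons [simp]: "subst \<phi> (c # u) = \<phi> c @ subst \<phi> u"
  by (simp add: subst_def)

lemma subst_append [simp]: "subst \<phi> (u @ v) = subst \<phi> u @ subst \<phi> v"
  by (simp add: subst_def)

lemma set_subst: "set (subst \<phi> u) = (\<Union>c\<in>set u. set (\<phi> c))"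
  by (simp add: subst_def)

lemma subst_subst: "subst \<psi> (subst \<phi> u) = subst (\<lambda>c. subst \<psi> (\<phi> c)) u"
  by (induction u) auto

lemma count_list_subst:
  assumes "\<And>c. count_list (\<phi> c) a = (if c = b then 1 else 0)"
  shows "count_list (subst \<phi> u) a = count_list u b"
  using assms by (induction u) auto

lemma sylvP_subst_identity:
  "sylvP (subst \<phi> [x, y, s, x, t, y]) = sylvP (subst \<phi> [y, x, s, x, t, y])"
proof -
  have "mset (\<phi> x @ \<phi> y) = mset (\<phi> y @ \<phi> x)" "set (\<phi> x @ \<phi> y) \<subseteq> set (\<phi> s @ \<phi> x @ \<phi> t @ \<phi> y)"
    by auto
  from sylvP_perm_prefix[OF this] show ?thesis
    by simp
qed

lemma deriv_step_instance:
  "(p, q) \<in> \<Sigma> \<Longrightarrow> deriv_step \<Sigma> (a @ subst \<phi> p @ b) (a @ subst \<phi> q @ b)"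
  unfolding deriv_step_def by blast

lemma derivable_refl [simp]: "derivable \<Sigma> u u"
  by (simp add: derivable_def)

lemma derivable_trans: "derivable \<Sigma> u v \<Longrightarrow> derivable \<Sigma> v w \<Longrightarrow> derivable \<Sigma> u w"
  unfolding derivable_def by (rule rtranclp_trans)

lemma derivable_sym: "derivable \<Sigma> u v \<Longrightarrow> derivable \<Sigma> v u"
proof -
  have "symp (deriv_step \<Sigma>)"
    unfolding deriv_step_def by (rule sympI) blast
  then show "derivable \<Sigma> u v \<Longrightarrow> derivable \<Sigma> v u"
    unfolding derivable_def by (blast dest: sympD[OF symp_rtranclp])
qed

lemma deriv_step_Cons: "deriv_step \<Sigma> u v \<Longrightarrow> deriv_step \<Sigma> (c # u) (c # v)"
proof -
  assume "deriv_step \<Sigma> u v"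
  then obtain a b \<phi> p q where "(p, q) \<in> \<Sigma> \<or> (q, p) \<in> \<Sigma>"
    and "u = a @ subst \<phi> p @ b" "v = a @ subst \<phi> q @ b"
    unfolding deriv_step_def by blast
  moreover from this have "c # u = (c # a) @ subst \<phi> p @ b" "c # v = (c # a) @ subst \<phi> q @ b"
    by simp_all
  ultimately show ?thesis
    unfolding deriv_step_def by blast
qed

lemma derivable_Cons: "derivable \<Sigma> u v \<Longrightarrow> derivable \<Sigma> (c # u) (c # v)"
  unfolding derivable_def
proof (induction rule: rtranclp_induct)
  case (step v w)
  then show ?case
    using deriv_step_Cons by (metis rtranclp.rtrancl_into_rtrancl)
qed simp

lemma derivable_sound:
  assumes "\<And>p q \<phi>. (p, q) \<in> \<Sigma> \<Longrightarrow> sylvP (subst \<phi> p) = sylvP (subst \<phi> q)"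
    and "derivable \<Sigma> u v"
  shows "sylvP (subst \<psi> u) = sylvP (subst \<psi> v)"
  using assms(2) unfolding derivable_def
proof (induction rule: rtranclp_induct)
  case (step v w)
  then obtain a b \<phi> p q where pq: "(p, q) \<in> \<Sigma> \<or> (q, p) \<in> \<Sigma>"
    and v: "v = a @ subst \<phi> p @ b" and w: "w = a @ subst \<phi> q @ b"
    unfolding deriv_step_def by blast
  let ?\<chi> = "\<lambda>c. subst \<psi> (\<phi> c)"
  have "sylvP (subst ?\<chi> p) = sylvP (subst ?\<chi> q)"
    using pq assms(1)[of p q ?\<chi>] assms(1)[of q p ?\<chi>] by auto
  then have "sylvP (subst \<psi> (subst \<phi> p)) = sylvP (subst \<psi> (subst \<phi> q))"
    by (simp only: subst_subst)
  then have "sylvP (subst \<psi> v) = sylvP (subst \<psi> w)"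
    unfolding v w subst_append by (rule sylvP_cong)
  with step.IH show ?case by simp
qed simp

abbreviation sylv_basis :: "nat \<Rightarrow> nat \<Rightarrow> nat \<Rightarrow> nat \<Rightarrow> ident set" where
  "sylv_basis x y s t \<equiv> {([x, y, s, x, t, y], [y, x, s, x, t, y])}"

lemma derivable_imp_sylv_sat:
  assumes "derivable (sylv_basis x y s t) u v"
  shows "sylv_sat n u v"
proof -
  have "sylvP (subst \<phi> u) = sylvP (subst \<phi> v)" for \<phi>
    by (rule derivable_sound[OF _ assms]) (use sylvP_subst_identity in auto)
  then show ?thesis
    unfolding sylv_sat_def by blast
qed

(* The suffix after the last occurrence of x; the whole word if x does not occur. *)
fun after_last :: "'a \<Rightarrow> 'a list \<Rightarrow> 'a list" where
  "after_last x [] = []"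
| "after_last x (c # w) = (if x \<in> set w then after_last x w else if c = x then w else c # w)"

lemma after_last_notin: "x \<notin> set w \<Longrightarrow> after_last x w = w"
  by (induction w) auto

lemma after_last_append_in: "x \<in> set w \<Longrightarrow> after_last x (p @ w) = after_last x w"
  by (induction p) auto

lemma after_last_append_notin: "x \<notin> set w \<Longrightarrow> after_last x (p @ w) = after_last x p @ w"
  by (induction p) (auto simp: after_last_notin)

lemma count_after_last_le: "count_list (after_last x w) y \<le> count_list w y"
  by (induction w) auto

lemma count_after_last_self: "count_list (after_last x w) x = 0"
  by (induction w) (auto simp: after_last_notin)

lemma after_last_subst:
  assumes "\<phi> x = [a]" "\<And>c. c \<noteq> x \<Longrightarrow> a \<notin> set (\<phi> c)"
  shows "after_last a (subst \<phi> u) = subst \<phi> (after_last x u)"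
proof (induction u)
  case Nil
  then show ?case by simp
next
  case (Cons c u)
  have "a \<in> set (\<phi> c) \<longleftrightarrow> c = x" for c
    using assms by auto
  then have occ: "a \<in> set (subst \<phi> u) \<longleftrightarrow> x \<in> set u"
    by (auto simp: set_subst)
  show ?case
  proof (cases "x \<in> set u")
    case True
    then show ?thesis using Cons occ by (simp add: after_last_append_in)
  next
    case False
    then show ?thesis using occ assms by (simp add: after_last_append_notin after_last_notin)
  qed
qed

lemma count_list_replicate [simp]: "count_list (replicate n a) b = (if a = b then n else 0)"
  by (induction n) auto

fun left_spine :: "'a tree \<Rightarrow> 'a list" where
  "left_spine Leaf = []"
| "left_spine (Node l x r) = x # left_spine l"

lemma left_spine_bst_ins:
  "left_spine (bst_ins c T) =
     (if \<forall>y\<in>set (left_spine T). c \<le> y then left_spine T @ [c] else left_spine T)"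
  by (induction T) auto

lemma left_spine_sylvP_binary:
  "set w \<subseteq> {1, 2} \<Longrightarrow>
   left_spine (sylvP w) = replicate (count_list (after_last 1 w) 2) 2 @ replicate (count_list w 1) 1"
proof (induction w)
  case Nil
  then show ?case by simp
next
  case (Cons c w)
  then show ?case
    by (auto simp: left_spine_bst_ins after_last_notin replicate_append_same count_list_0_iff)
qed

definition after_last_equiv :: "nat list \<Rightarrow> nat list \<Rightarrow> bool" where
  "after_last_equiv u v \<longleftrightarrow>
     (\<forall>x y. count_list (after_last x u) y = count_list (after_last x v) y)"

lemma sylv_sat_imp_after_last_equiv:
  assumes "2 \<le> n" "sylv_sat n u v"
  shows "after_last_equiv u v"
  unfolding after_last_equiv_def
proof (intro allI)
  fix x y :: nat
  show "count_list (after_last x u) y = count_list (after_last x v) y"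
  proof (cases "x = y")
    case True
    then show ?thesis by (simp add: count_after_last_self)
  next
    case False
    define \<phi> :: "nat \<Rightarrow> nat list" where
      "\<phi> = (\<lambda>c. if c = x then [1] else if c = y then [2] else [])"
    have spine: "count_list (after_last x w) y = count_list (left_spine (sylvP (subst \<phi> w))) 2" for w
    proof -
      have "set (subst \<phi> w) \<subseteq> {1, 2}"
        by (auto simp: set_subst \<phi>_def split: if_splits)
      then have "count_list (left_spine (sylvP (subst \<phi> w))) 2 = count_list (after_last 1 (subst \<phi> w)) 2"
        by (simp add: left_spine_sylvP_binary)
      also have "\<dots> = count_list (subst \<phi> (after_last x w)) 2"
        by (subst after_last_subst[where x = x]) (auto simp: \<phi>_def)
      also have "\<dots> = count_list (after_last x w) y"
        by (rule count_list_subst) (use False in \<open>auto simp: \<phi>_def\<close>)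
      finally show ?thesis by simp
    qed
    have "in_alph n 1" "in_alph n 2"
      using assms(1) by (auto simp: in_alph_def one_enat_def numeral_eq_enat elim: order.trans[rotated])
    then have "sylvP (subst \<phi> u) = sylvP (subst \<phi> v)"
      using assms(2) unfolding sylv_sat_def \<phi>_def by auto
    then show ?thesis by (simp add: spine)
  qed
qed

lemma after_last_equiv_count:
  assumes "after_last_equiv u v"
  shows "count_list u y = count_list v y"
proof -
  obtain x :: nat where "x \<notin> set (u @ v)"
    using ex_new_if_finite[OF infinite_UNIV_nat] by blast
  then have "after_last x u = u" "after_last x v = v"
    by (simp_all add: after_last_notin)
  moreover have "count_list (after_last x u) y = count_list (after_last x v) y"
    using assms unfolding after_last_equiv_def by blast
  ultimately show ?thesis by simp
qed

lemma after_last_equiv_set: "after_last_equiv u v \<Longrightarrow> set u = set v"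
  by (rule set_eqI) (metis after_last_equiv_count count_list_0_iff)

lemma after_last_equiv_trans:
  "after_last_equiv u v \<Longrightarrow> after_last_equiv v w \<Longrightarrow> after_last_equiv u w"
  unfolding after_last_equiv_def by simp

lemma after_last_equiv_Cons_cancel:
  assumes "after_last_equiv (a # u) (a # v)"
  shows "after_last_equiv u v"
  unfolding after_last_equiv_def
proof (intro allI)
  fix x y
  have "count_list u c = count_list v c" for c
    using after_last_equiv_count[OF assms, of c] by (simp split: if_splits)
  then have sets: "set u = set v"
    by (metis set_eqI count_list_0_iff)
  have eq: "count_list (after_last x (a # u)) y = count_list (after_last x (a # v)) y"
    using assms unfolding after_last_equiv_def by blast
  show "count_list (after_last x u) y = count_list (after_last x v) y"
  proof (cases "x \<in> set u")
    case True
    then show ?thesis using eq sets by simp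
  next
    case False
    then show ?thesis using eq sets by (simp add: after_last_notin split: if_splits)
  qed
qed

lemma after_last_equiv_prefix:
  assumes equiv: "after_last_equiv (a # u) (w @ a # v)" and "a \<notin> set w" "c \<in> set w"
  shows "c \<in> set v" and "a \<in> set v"
proof -
  have cnt: "count_list (a # u) d = count_list (w @ a # v) d" for d
    using after_last_equiv_count[OF equiv] .
  have af: "count_list (after_last x (a # u)) d = count_list (after_last x (w @ a # v)) d" for x d
    using equiv unfolding after_last_equiv_def by blast
  have "c \<noteq> a" "count_list w a = 0"
    using assms(2,3) by (auto simp: count_list_0_iff)
  show "c \<in> set v"
  proof (rule ccontr)
    assume "c \<notin> set v"
    then have "count_list (after_last c (w @ a # v)) a = count_list (after_last c w) a + 1 + count_list v a"
      using \<open>c \<noteq> a\<close> by (simp add: after_last_append_notin)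
    also have "\<dots> = count_list (a # u) a"
      using cnt[of a] count_after_last_le[of c w a] \<open>count_list w a = 0\<close> by simp
    finally have "count_list (after_last c u) a = Suc (count_list u a)"
      using af[of c a] after_last_equiv_set[OF equiv] assms(3) \<open>c \<noteq> a\<close> by auto
    then show False
      using count_after_last_le[of c u a] by simp
  qed
  show "a \<in> set v"
  proof (rule ccontr)
    assume "a \<notin> set v"
    then have "a \<notin> set u"
      using cnt[of a] \<open>count_list w a = 0\<close> by (simp add: count_list_0_iff)
    have "after_last a (w @ a # v) = after_last a (w @ [a]) @ v"
      using after_last_append_notin[OF \<open>a \<notin> set v\<close>, of "w @ [a]"] by simp
    also have "\<dots> = v"
      by (simp add: after_last_append_in)
    finally have "count_list u c = count_list v c"
      using af[of a c] \<open>a \<notin> set u\<close> by (simp add: after_last_notin)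
    moreover have "count_list u c = count_list w c + count_list v c"
      using cnt[of c] \<open>c \<noteq> a\<close> by simp
    ultimately show False
      using assms(3) by (simp add: count_list_0_iff)
  qed
qed

context
  fixes x y s t :: nat
  assumes distinct: "distinct [x, y, s, t]"
begin

lemma deriv_step_swap:
  "deriv_step (sylv_basis x y s t) (p @ [c, d] @ s1 @ [c] @ t1 @ [d] @ r) (p @ [d, c] @ s1 @ [c] @ t1 @ [d] @ r)"
proof -
  define \<phi> where "\<phi> = (\<lambda>i. if i = x then [c] else if i = y then [d] else if i = s then s1 else if i = t then t1 else [])"
  have lhs: "subst \<phi> [x, y, s, x, t, y] = [c, d] @ s1 @ [c] @ t1 @ [d]"
    and rhs: "subst \<phi> [y, x, s, x, t, y] = [d, c] @ s1 @ [c] @ t1 @ [d]"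
    using distinct by (auto simp: \<phi>_def)
  have "deriv_step (sylv_basis x y s t) (p @ subst \<phi> [x, y, s, x, t, y] @ r) (p @ subst \<phi> [y, x, s, x, t, y] @ r)"
    by (rule deriv_step_instance) simp
  then show ?thesis
    unfolding lhs rhs by simp
qed

lemma derivable_swap:
  assumes "c \<in> set q" "d \<in> set q"
  shows "derivable (sylv_basis x y s t) (p @ c # d # q) (p @ d # c # q)"
proof (cases "c = d")
  case True
  then show ?thesis by simp
next
  case False
  obtain q1 q2 where q: "q = q1 @ c # q2" "c \<notin> set q1"
    using split_list_first[OF assms(1)] by blast
  show ?thesis
  proof (cases "d \<in> set q2")
    case True
    then obtain t1 r where "q2 = t1 @ d # r"
      by (meson split_list)
    then have "deriv_step (sylv_basis x y s t) (p @ c # d # q) (p @ d # c # q)"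
      using deriv_step_swap[of p c d q1 t1 r] q by simp
    then show ?thesis
      unfolding derivable_def by blast
  next
    case False
    then have "d \<in> set q1"
      using q assms(2) \<open>c \<noteq> d\<close> by auto
    then obtain s1 t1 where "q1 = s1 @ d # t1"
      by (meson split_list)
    then have "deriv_step (sylv_basis x y s t) (p @ d # c # q) (p @ c # d # q)"
      using deriv_step_swap[of p d c s1 t1 q2] q by simp
    then show ?thesis
      unfolding derivable_def by (blast intro: derivable_sym[unfolded derivable_def])
  qed
qed

lemma derivable_move_front:
  "\<forall>c\<in>set w. {c, a} \<subseteq> set q \<Longrightarrow> derivable (sylv_basis x y s t) (p @ w @ a # q) (p @ a # w @ q)"
proof (induction w arbitrary: p)
  case (Cons c w)
  have "derivable (sylv_basis x y s t) ((p @ [c]) @ w @ a # q) ((p @ [c]) @ a # w @ q)"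
    using Cons.IH[of "p @ [c]"] Cons.prems by simp
  moreover have "derivable (sylv_basis x y s t) (p @ c # a # w @ q) (p @ a # c # w @ q)"
    by (rule derivable_swap) (use Cons.prems in auto)
  ultimately show ?case
    by (auto intro: derivable_trans)
qed simp

lemma after_last_equiv_imp_derivable:
  "after_last_equiv u v \<Longrightarrow> derivable (sylv_basis x y s t) u v"
proof (induction u arbitrary: v)
  case Nil
  then show ?case using after_last_equiv_set[OF Nil] by simp
next
  case (Cons a u)
  have "a \<in> set v"
    using after_last_equiv_set[OF Cons.prems] by auto
  then obtain w v' where v: "v = w @ a # v'" and "a \<notin> set w"
    using split_list_first[OF \<open>a \<in> set v\<close>] by blast
  have "\<forall>c\<in>set w. {c, a} \<subseteq> set v'"
    using after_last_equiv_prefix[OF Cons.prems[unfolded v] \<open>a \<notin> set w\<close>] by blast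
  then have move: "derivable (sylv_basis x y s t) v (a # w @ v')"
    using derivable_move_front[of w a v' "[]"] v by simp
  have "after_last_equiv v (a # w @ v')"
    by (rule sylv_sat_imp_after_last_equiv[OF order_refl derivable_imp_sylv_sat[OF move]])
  then have "after_last_equiv (a # u) (a # w @ v')"
    using Cons.prems by (rule after_last_equiv_trans[rotated])
  then have "derivable (sylv_basis x y s t) u (w @ v')"
    by (rule Cons.IH[OF after_last_equiv_Cons_cancel])
  then have "derivable (sylv_basis x y s t) (a # u) (a # w @ v')"
    by (rule derivable_Cons)
  then show ?case
    using derivable_sym[OF move] by (rule derivable_trans)
qed

end

theorem theorem4p6:
  fixes x y s t :: nat
  assumes "distinct [x, y, s, t]"
  shows "(\<forall>n::enat. 2 \<le> n \<longrightarrow>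
            finite_identity_basis (sylv_sat n) {([x, y, s, x, t, y], [y, x, s, x, t, y])})
       \<and> (\<forall>m n :: enat. 2 \<le> m \<longrightarrow> 2 \<le> n \<longrightarrow> (\<forall>u v. sylv_sat m u v \<longleftrightarrow> sylv_sat n u v))"
proof -
  have complete: "derivable (sylv_basis x y s t) u v" if "2 \<le> n" "sylv_sat n u v" for n u v
    using after_last_equiv_imp_derivable[OF assms] sylv_sat_imp_after_last_equiv[OF that] .
  have sound: "sylv_sat n u v" if "derivable (sylv_basis x y s t) u v" for n u v
    using derivable_imp_sylv_sat[OF that] .
  have "sylv_sat n [x, y, s, x, t, y] [y, x, s, x, t, y]" for n
    unfolding sylv_sat_def using sylvP_subst_identity by blast
  then have "finite_identity_basis (sylv_sat n) (sylv_basis x y s t)" if "2 \<le> n" for n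
    unfolding finite_identity_basis_def using complete[OF that] by simp
  moreover have "sylv_sat m u v \<longleftrightarrow> sylv_sat n u v" if "2 \<le> m" "2 \<le> n" for m n :: enat and u v
    using complete sound that by blast
  ultimately show ?thesis
    by blast
qed

end
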